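(* Let $n\ge 3$ and let $P(G(n))$ be the power graph of the gyrogroup $G(n)$ (defined in the context), with identity $e=0$. Then: (1) the detour eccentricity satisfies $ec_D(u)=2^{n-1}$ if $u\in P(n)\setminus\{e\}$, $ec_D(e)=2^{n-1}-1$, and $ec_D(u)=2^{n-1}$ if $u\in H(n)$; (2) $rad_D(P(G(n)))=2^{n-1}-1$; (3) $dia_D(P(G(n)))=2^{n-1}$.
   Context: Let $n\ge 3$ be an integer and $m=2^{n-1}$. Let $P(n)=\{0,1,\dots,m-1\}$, $H(n)=\{m,m+1,\dots,2^n-1\}$ and $G(n)=P(n)\cup H(n)$. For $i,j\in G(n)$ let $t,s,k\in P(n)$ be the residues modulo $m$ (taken in $\{0,\dots,m-1\}$) of $i+j$, $i+(\frac m2-1)j$ and $(\frac m2+1)i+(\frac m2-1)j$, respectively, and define $i\oplus j=t$ if $i,j\in P(n)$; $i\oplus j=t+m$ if $i\in P(n),j\in H(n)$; $i\oplus j=s+m$ if $i\in H(n),j\in P(n)$; $i\oplus j=k$ if $i,j\in H(n)$. Then $(G(n),\oplus)$ is a gyrogroup with identity $e=0$. Powers are defined by $a^1=a$, $a^{k+1}=a^k\oplus a$. The power graph $P(G(n))$ is the simple undirected graph with vertex set $G(n)$ in which distinct vertices $u,v$ are adjacent if and only if $u^k=v$ or $v^k=u$ for some positive integer $k$. In a connected graph, the detour distance $d_D(u,v)$ is the length of a longest $u$–$v$ path; the detour eccentricity $ec_D(u)$ is $\max_v d_D(u,v)$; the detour radius $rad_D$ and detour diameter $dia_D$ are the minimum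 and maximum detour eccentricities over all vertices. *)

theory Defs
  imports Main
begin

definition gm :: "nat \<Rightarrow> nat" where
  "gm n = 2 ^ (n - 1)"

definition Pn :: "nat \<Rightarrow> nat set" where
  "Pn n = {0..<gm n}"

definition Hn :: "nat \<Rightarrow> nat set" where
  "Hn n = {gm n..<2 ^ n}"

definition Gn :: "nat \<Rightarrow> nat set" where
  "Gn n = Pn n \<union> Hn n"

definition gop :: "nat \<Rightarrow> nat \<Rightarrow> nat \<Rightarrow> nat" where
  "gop n i j =
     (let m = gm n;
          t = (i + j) mod m;
          s = (i + (m div 2 - 1) * j) mod m;
          k = ((m div 2 + 1) * i + (m div 2 - 1) * j) mod m
      in if i \<in> Pn n \<and> j \<in> Pn n then t
         else if i \<in> Pn n \<and> j \<in> Hn n then t + m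
         else if i \<in> Hn n \<and> j \<in> Pn n then s + m
         else k)"

text \<open>Powers: a^1 = a, a^(k+1) = a^k \<oplus> a (the value at 0 is irrelevant; only positive powers are used).\<close>
fun gpow :: "nat \<Rightarrow> nat \<Rightarrow> nat \<Rightarrow> nat" where
  "gpow n a 0 = 0"
| "gpow n a (Suc 0) = a"
| "gpow n a (Suc (Suc k)) = gop n (gpow n a (Suc k)) a"

definition padj :: "nat \<Rightarrow> nat \<Rightarrow> nat \<Rightarrow> bool" where
  "padj n u v \<longleftrightarrow> u \<in> Gn n \<and> v \<in> Gn n \<and> u \<noteq> v \<and>
     ((\<exists>k>0. gpow n u k = v) \<or> (\<exists>k>0. gpow n v k = u))"

definition ppath :: "nat \<Rightarrow> nat \<Rightarrow> nat \<Rightarrow> nat list \<Rightarrow> bool" where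
  "ppath n u v p \<longleftrightarrow> p \<noteq> [] \<and> hd p = u \<and> last p = v \<and> distinct p \<and>
     set p \<subseteq> Gn n \<and> (\<forall>i. Suc i < length p \<longrightarrow> padj n (p ! i) (p ! Suc i))"

definition detour_dist :: "nat \<Rightarrow> nat \<Rightarrow> nat \<Rightarrow> nat" where
  "detour_dist n u v = Max {length p - 1 | p. ppath n u v p}"

definition detour_ecc :: "nat \<Rightarrow> nat \<Rightarrow> nat" where
  "detour_ecc n u = Max ((\<lambda>v. detour_dist n u v) ` Gn n)"

definition detour_rad :: "nat \<Rightarrow> nat" where
  "detour_rad n = Min ((\<lambda>u. detour_ecc n u) ` Gn n)"

definition detour_dia :: "nat \<Rightarrow> nat" where
  "detour_dia n = Max ((\<lambda>u. detour_ecc n u) ` Gn n)"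

end

theory Submission
  imports Defs "HOL-Number_Theory.Cong"
begin

text \<open>
  P(n) is the cyclic group of order m = 2^(n-1). Its subgroups form a chain, so of any two
  elements of P(n) one is a multiple of the other: P(n) spans a complete graph. Each h in H(n)
  satisfies h \<oplus> h = e, so its only powers are h and e and h is a pendant vertex hanging at e.
  A pendant vertex can only be an end of a path, and a path with pendant vertices at both ends
  has at most three vertices. Hence a path has at most m + 1 vertices, and at most m if it
  starts at e. A Hamiltonian path of P(n), possibly prolonged by pendant vertices, attains these
  bounds from every vertex, and every pair of vertices is joined through e.
\<close>

lemma successively_if_distinct:
  "distinct p \<Longrightarrow> (\<And>x y. x \<in> set p \<Longrightarrow> y \<in> set p \<Longrightarrow> x \<noteq> y \<Longrightarrow> R x y) \<Longrightarrow>
    successively R p"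
  by (induction p rule: induct_list012) auto

lemma pendant_in_path_at_end:
  assumes "distinct p" and "successively R p" and "x \<in> set p"
    and pendant: "\<And>y. R x y \<Longrightarrow> y = z" "\<And>y. R y x \<Longrightarrow> y = z"
  shows "x = hd p \<or> x = last p"
proof (rule ccontr)
  obtain i where i: "i < length p" "p ! i = x"
    using assms(3) by (meson in_set_conv_nth)
  then have ne: "p \<noteq> []"
    by auto
  assume "\<not> (x = hd p \<or> x = last p)"
  then have "i \<noteq> 0" and "i \<noteq> length p - 1"
    using i hd_conv_nth[OF ne] last_conv_nth[OF ne] by metis+
  then have "p ! (i - 1) = z" and "p ! Suc i = z"
    using successively_nth[OF assms(2), of "i - 1"] successively_nth[OF assms(2), of i] i pendant
    by simp_all
  then have "i - 1 = Suc i"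
    using nth_eq_iff_index_eq[OF assms(1), of "i - 1" "Suc i"] i \<open>i \<noteq> length p - 1\<close> by simp
  then show False
    by simp
qed

lemma path_between_pendants_length:
  assumes "distinct p" and "successively R p"
    and "\<And>y. R (hd p) y \<Longrightarrow> y = z" and "\<And>y. R y (last p) \<Longrightarrow> y = z"
  shows "length p \<le> 3"
proof (rule ccontr)
  assume long: "\<not> length p \<le> 3"
  then have ne: "p \<noteq> []"
    by auto
  have "R (hd p) (p ! 1)"
    using successively_nth[OF assms(2), of 0] long by (simp add: hd_conv_nth[OF ne])
  moreover have "R (p ! (length p - 2)) (last p)"
    using successively_nth[OF assms(2), of "length p - 2"] long
    by (simp add: last_conv_nth[OF ne] Suc_diff_Suc numeral_2_eq_2)
  ultimately have "p ! 1 = p ! (length p - 2)"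
    using assms(3,4) by simp
  then show False
    using assms(1) long by (simp add: nth_eq_iff_index_eq)
qed

lemma path_from_neighbour_of_pendant_length:
  assumes "distinct p" and "successively R p"
    and "hd p = z" and "\<And>y. R y (last p) \<Longrightarrow> y = z"
  shows "length p \<le> 2"
proof (rule ccontr)
  assume long: "\<not> length p \<le> 2"
  then have ne: "p \<noteq> []"
    by auto
  have "R (p ! (length p - 2)) (last p)"
    using successively_nth[OF assms(2), of "length p - 2"] long
    by (simp add: last_conv_nth[OF ne] Suc_diff_Suc numeral_2_eq_2)
  then have "p ! 0 = p ! (length p - 2)"
    using assms(3,4) long by (simp add: hd_conv_nth[OF ne])
  moreover have "0 < length p" and "length p - 2 < length p"
    using ne by simp_all
  ultimately have "0 = length p - 2"
    using nth_eq_iff_index_eq[OF assms(1)] by blast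
  then show False
    using long by simp
qed

lemma distinct_length_le_card:
  "distinct p \<Longrightarrow> set p \<subseteq> A \<Longrightarrow> finite A \<Longrightarrow> length p \<le> card A"
  by (metis card_mono distinct_card)

lemma exists_pos_multiple_mod:
  fixes u v m :: nat
  assumes "0 < m" and "gcd u m dvd v"
  shows "\<exists>k>0. (k * u) mod m = v mod m"
proof -
  obtain x where "[u * x = v] (mod m)"
    using cong_solve_dvd_nat[OF assms(2)] by blast
  then have "((x + m) * u) mod m = v mod m"
    by (simp add: cong_def algebra_simps)
  then show ?thesis
    using assms(1) by (intro exI[of _ "x + m"]) simp
qed

lemma gcd_prime_power_dvd_linear:
  fixes p :: nat
  assumes "prime p"
  shows "gcd u (p ^ e) dvd gcd v (p ^ e) \<or> gcd v (p ^ e) dvd gcd u (p ^ e)"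
proof -
  obtain i j where "gcd u (p ^ e) = p ^ i" and "gcd v (p ^ e) = p ^ j"
    using divides_primepow_nat[OF assms] by (meson gcd_dvd2)
  then show ?thesis
    by (cases "i \<le> j") (simp_all add: le_imp_power_dvd)
qed

lemma gm_pos: "0 < gm n"
  by (simp add: gm_def)

lemma gm_ge_2: "2 \<le> n \<Longrightarrow> 2 \<le> gm n"
  unfolding gm_def by (cases "n - 1") auto

lemma two_pow_eq_2_gm: "1 \<le> n \<Longrightarrow> (2::nat) ^ n = 2 * gm n"
  unfolding gm_def by (cases n) auto

lemma zero_in_Pn: "0 \<in> Pn n"
  by (simp add: Pn_def gm_pos)

lemma mod_gm_in_Pn: "x mod gm n \<in> Pn n"
  by (simp add: Pn_def gm_pos)

lemma gm_in_Hn: "1 \<le> n \<Longrightarrow> gm n \<in> Hn n"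
  by (cases n) (auto simp: Hn_def gm_def)

lemma Hn_not_Pn: "h \<in> Hn n \<Longrightarrow> h \<notin> Pn n"
  by (simp add: Pn_def Hn_def)

lemma card_Pn: "card (Pn n) = gm n"
  by (simp add: Pn_def)

lemma finite_Gn: "finite (Gn n)"
  by (simp add: Gn_def Pn_def Hn_def)

lemma Hn_mod_gm_plus_gm: "1 \<le> n \<Longrightarrow> h \<in> Hn n \<Longrightarrow> h mod gm n + gm n = h"
  by (auto simp: Hn_def two_pow_eq_2_gm le_mod_geq)

lemma gop_Pn_Pn: "a \<in> Pn n \<Longrightarrow> b \<in> Pn n \<Longrightarrow> gop n a b = (a + b) mod gm n"
  unfolding gop_def Let_def by simp

lemma gop_Pn_Hn:
  "a \<in> Pn n \<Longrightarrow> b \<in> Hn n \<Longrightarrow> gop n a b = (a + b) mod gm n + gm n"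
  unfolding gop_def Let_def by (simp add: Hn_not_Pn)

lemma gop_Hn_Hn:
  "a \<in> Hn n \<Longrightarrow> b \<in> Hn n \<Longrightarrow>
    gop n a b = ((gm n div 2 + 1) * a + (gm n div 2 - 1) * b) mod gm n"
  unfolding gop_def Let_def by (simp add: Hn_not_Pn)

lemma gop_zero_Hn: "1 \<le> n \<Longrightarrow> h \<in> Hn n \<Longrightarrow> gop n 0 h = h"
  by (simp add: gop_Pn_Hn zero_in_Pn Hn_mod_gm_plus_gm)

lemma gop_Hn_self:
  assumes "2 \<le> n" and h: "h \<in> Hn n"
  shows "gop n h h = 0"
proof -
  obtain j where "n = 2 + j"
    using le_Suc_ex[OF assms(1)] by blast
  then have m: "gm n = 2 * 2 ^ j"
    by (simp add: gm_def)
  have "(2 ^ j + 1) + (2 ^ j - 1) = 2 * (2::nat) ^ j"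
    using one_le_power[of "2::nat" j] by linarith
  then have "(gm n div 2 + 1) * h + (gm n div 2 - 1) * h = gm n * h"
    unfolding m by (metis add_mult_distrib nonzero_mult_div_cancel_left zero_neq_numeral)
  then show ?thesis
    by (simp only: gop_Hn_Hn[OF h h] mod_mult_self1_is_0)
qed

lemma gpow_Pn:
  assumes a: "a \<in> Pn n"
  shows "gpow n a (Suc k) = (Suc k * a) mod gm n"
proof (induction k)
  case 0
  then show ?case
    using a by (simp add: Pn_def)
next
  case (Suc k)
  have "gpow n a (Suc (Suc k)) = ((Suc k * a) mod gm n + a) mod gm n"
    using Suc a by (simp add: gop_Pn_Pn mod_gm_in_Pn)
  also have "\<dots> = (Suc k * a + a) mod gm n"
    by (rule mod_add_left_eq)
  finally show ?case
    by (simp add: add.commute)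
qed

lemma gpow_Hn:
  assumes "2 \<le> n" and h: "h \<in> Hn n"
  shows "gpow n h (Suc k) = (if even k then h else 0)"
  by (induction k) (use assms in \<open>auto simp: gop_Hn_self gop_zero_Hn\<close>)

lemma gpow_Pn_in_Pn: "a \<in> Pn n \<Longrightarrow> 0 < k \<Longrightarrow> gpow n a k \<in> Pn n"
  by (cases k) (auto simp: gpow_Pn mod_gm_in_Pn)

lemma Pn_power_comparable:
  assumes u: "u \<in> Pn n" and v: "v \<in> Pn n"
  shows "(\<exists>k>0. gpow n u k = v) \<or> (\<exists>k>0. gpow n v k = u)"
proof -
  have reach: "\<exists>k>0. gpow n a k = b" if a: "a \<in> Pn n" and b: "b \<in> Pn n"
    and dvd: "gcd a (gm n) dvd gcd b (gm n)" for a b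
  proof -
    obtain k where k: "0 < k" and "(k * a) mod gm n = b mod gm n"
      using exists_pos_multiple_mod[OF gm_pos dvd_trans[OF dvd gcd_dvd1]] by blast
    moreover have "gpow n a k = (k * a) mod gm n"
      using gpow_Pn[OF a, of "k - 1"] k by simp
    ultimately show ?thesis
      using b by (auto simp: Pn_def)
  qed
  have "gcd u (gm n) dvd gcd v (gm n) \<or> gcd v (gm n) dvd gcd u (gm n)"
    unfolding gm_def by (rule gcd_prime_power_dvd_linear[OF two_is_prime_nat])
  then show ?thesis
    using reach[OF u v] reach[OF v u] by blast
qed

lemma Pn_subset_Gn: "Pn n \<subseteq> Gn n" and Hn_subset_Gn: "Hn n \<subseteq> Gn n"
  by (auto simp: Gn_def)

lemma zero_in_Gn: "0 \<in> Gn n"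
  using zero_in_Pn Pn_subset_Gn by blast

lemma padj_commute: "padj n u v \<longleftrightarrow> padj n v u"
  by (auto simp: padj_def)

lemma distinct_power_cases:
  assumes "2 \<le> n" and u: "u \<in> Gn n" and "0 < k" and "gpow n u k = v" and "u \<noteq> v"
  shows "(u \<in> Pn n \<and> v \<in> Pn n) \<or> (u \<in> Hn n \<and> v = 0)"
proof (cases "u \<in> Pn n")
  case True
  then show ?thesis
    using gpow_Pn_in_Pn assms by blast
next
  case False
  then have "u \<in> Hn n"
    using u by (simp add: Gn_def)
  moreover obtain j where "k = Suc j"
    using \<open>0 < k\<close> gr0_implies_Suc by blast
  ultimately show ?thesis
    using gpow_Hn assms by (metis (full_types))
qed

lemma padj_iff:
  assumes "2 \<le> n"
  shows "padj n u v \<longleftrightarrow> u \<noteq> v \<and>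
    ((u \<in> Pn n \<and> v \<in> Pn n) \<or> (u = 0 \<and> v \<in> Hn n) \<or> (u \<in> Hn n \<and> v = 0))"
proof
  assume "padj n u v"
  then show "u \<noteq> v \<and>
    ((u \<in> Pn n \<and> v \<in> Pn n) \<or> (u = 0 \<and> v \<in> Hn n) \<or> (u \<in> Hn n \<and> v = 0))"
    unfolding padj_def using distinct_power_cases[OF assms] by metis
next
  have square_Hn: "gpow n h 2 = 0" if "h \<in> Hn n" for h
    using gpow_Hn[OF assms that, of 1] by (simp add: numeral_2_eq_2)
  assume uv: "u \<noteq> v \<and>
    ((u \<in> Pn n \<and> v \<in> Pn n) \<or> (u = 0 \<and> v \<in> Hn n) \<or> (u \<in> Hn n \<and> v = 0))"
  then have "(\<exists>k>0. gpow n u k = v) \<or> (\<exists>k>0. gpow n v k = u)"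
    using Pn_power_comparable square_Hn by (metis zero_less_numeral)
  moreover have "u \<in> Gn n" and "v \<in> Gn n"
    using uv zero_in_Pn Pn_subset_Gn Hn_subset_Gn by blast+
  ultimately show "padj n u v"
    using uv by (simp add: padj_def)
qed

lemma padj_Hn_pendant: "2 \<le> n \<Longrightarrow> h \<in> Hn n \<Longrightarrow> padj n h y \<Longrightarrow> y = 0"
  using Hn_not_Pn[of 0 n] zero_in_Pn[of n] Hn_not_Pn[of h n] by (auto simp: padj_iff)

lemma padj_zero: "2 \<le> n \<Longrightarrow> v \<in> Gn n \<Longrightarrow> v \<noteq> 0 \<Longrightarrow> padj n 0 v"
  using zero_in_Pn by (auto simp: padj_iff Gn_def)

lemma successively_padj_Pn:
  "2 \<le> n \<Longrightarrow> distinct p \<Longrightarrow> set p \<subseteq> Pn n \<Longrightarrow> successively (padj n) p"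
  by (rule successively_if_distinct) (auto simp: padj_iff)

lemma ppath_iff:
  "ppath n u v p \<longleftrightarrow>
    p \<noteq> [] \<and> hd p = u \<and> last p = v \<and> distinct p \<and> set p \<subseteq> Gn n \<and> successively (padj n) p"
  by (simp add: ppath_def successively_conv_nth)

lemma ppath_Hn_at_end:
  assumes "2 \<le> n" and "ppath n u v p" and "h \<in> set p" and "h \<in> Hn n"
  shows "h = u \<or> h = v"
  using pendant_in_path_at_end[of p "padj n" h 0] assms padj_Hn_pendant[OF assms(1,4)] padj_commute
  unfolding ppath_iff by metis

lemma ppath_length_le:
  assumes n: "2 \<le> n" and p: "ppath n u v p"
  shows "length p \<le> gm n + 1"
proof -
  have path: "distinct p" "successively (padj n) p" "hd p = u" "last p = v" "set p \<subseteq> Gn n"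
    using p by (simp_all add: ppath_iff)
  have bound: "length p \<le> gm n + 1" if "set p \<subseteq> insert w (Pn n)" for w
  proof -
    have "length p \<le> card (insert w (Pn n))"
      using distinct_length_le_card[OF path(1) that] by (simp add: Pn_def)
    also have "\<dots> \<le> gm n + 1"
      using card_insert_le_m1[of "gm n + 1" "Pn n" w] by (simp add: card_Pn Pn_def)
    finally show ?thesis .
  qed
  have "u \<in> Gn n" and "v \<in> Gn n"
    using p by (auto simp: ppath_iff)
  then consider "u \<in> Hn n" "v \<in> Hn n" | "u \<in> Pn n" | "v \<in> Pn n"
    by (auto simp: Gn_def)
  then show ?thesis
  proof cases
    case 1
    have pendant: "\<And>y. padj n h y \<Longrightarrow> y = 0" "\<And>y. padj n y h \<Longrightarrow> y = 0" if "h \<in> Hn n" for h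
      using padj_Hn_pendant[OF n that] padj_commute by blast+
    have "length p \<le> 3"
      using path_between_pendants_length[OF path(1,2)] pendant 1 path(3,4) by metis
    then show ?thesis
      using gm_ge_2[OF n] by linarith
  next
    case 2
    then have "set p \<subseteq> insert v (Pn n)"
      using ppath_Hn_at_end[OF n p] path(5) Hn_not_Pn by (fastforce simp: Gn_def)
    then show ?thesis
      by (rule bound)
  next
    case 3
    then have "set p \<subseteq> insert u (Pn n)"
      using ppath_Hn_at_end[OF n p] path(5) Hn_not_Pn by (fastforce simp: Gn_def)
    then show ?thesis
      by (rule bound)
  qed
qed

lemma ppath_from_zero_length_le:
  assumes n: "2 \<le> n" and p: "ppath n 0 v p"
  shows "length p \<le> gm n"
proof (cases "v \<in> Hn n")
  case True
  have "length p \<le> 2"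
    using path_from_neighbour_of_pendant_length[of p "padj n" 0] p True padj_Hn_pendant[OF n]
      padj_commute unfolding ppath_iff by metis
  then show ?thesis
    using gm_ge_2[OF n] by linarith
next
  case False
  then have "set p \<subseteq> Pn n"
    using p ppath_Hn_at_end[OF n p] Hn_not_Pn[of 0 n] zero_in_Pn[of n]
    by (fastforce simp: ppath_iff Gn_def)
  then show ?thesis
    using distinct_length_le_card[of p "Pn n"] p by (simp add: ppath_iff card_Pn Pn_def)
qed

lemma ppath_exists:
  assumes n: "2 \<le> n" and u: "u \<in> Gn n" and v: "v \<in> Gn n"
  shows "\<exists>p. ppath n u v p"
proof -
  have "padj n 0 w" and "padj n w 0" if "w \<in> Gn n" "w \<noteq> 0" for w
    using padj_zero[OF n that] padj_commute by blast+
  with zero_in_Gn have "ppath n u v [u, 0, v] \<or> ppath n u v [u, v] \<or> ppath n u v [u]"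
    using u v by (cases "u = v"; cases "u = 0"; cases "v = 0") (auto simp: ppath_iff)
  then show ?thesis
    by blast
qed

lemma detour_ecc_eqI:
  assumes n: "2 \<le> n" and u: "u \<in> Gn n"
    and longest: "\<And>v p. ppath n u v p \<Longrightarrow> length p \<le> Suc b"
    and witness: "ppath n u w q" "length q = Suc b"
  shows "detour_ecc n u = b"
proof -
  let ?S = "\<lambda>v. {length p - 1 | p. ppath n u v p}"
  have finite: "finite (?S v)" for v
    by (rule finite_subset[of _ "{..b}"]) (auto dest: longest)
  have upper: "detour_dist n u v \<le> b" if "v \<in> Gn n" for v
    unfolding detour_dist_def
    using ppath_exists[OF n u that] finite by (intro Max.boundedI) (auto dest: longest)
  have w: "w \<in> Gn n"
    using witness by (auto simp: ppath_iff)
  have "b \<le> detour_dist n u w"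
    unfolding detour_dist_def using witness finite by (intro Max_ge) force+
  also have "\<dots> \<le> detour_ecc n u"
    unfolding detour_ecc_def using finite_Gn w by (intro Max_ge) auto
  finally show ?thesis
    unfolding detour_ecc_def using finite_Gn w upper by (intro antisym Max.boundedI) auto
qed

lemma detour_ecc_zero:
  assumes n: "2 \<le> n"
  shows "detour_ecc n 0 = gm n - 1"
proof (rule detour_ecc_eqI[OF n])
  show "0 \<in> Gn n"
    by (rule zero_in_Gn)
  show "ppath n 0 (gm n - 1) [0..<gm n]"
    using gm_pos[of n] successively_padj_Pn[OF n] Pn_subset_Gn
    by (simp add: ppath_iff Pn_def)
qed (use ppath_from_zero_length_le[OF n] gm_pos[of n] in auto)

lemma detour_ecc_Hn:
  assumes n: "2 \<le> n" and h: "h \<in> Hn n"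
  shows "detour_ecc n h = gm n"
proof (rule detour_ecc_eqI[OF n])
  show "h \<in> Gn n"
    using h Hn_subset_Gn by blast
  then have "padj n h 0"
    using padj_zero[OF n] padj_commute h Hn_not_Pn zero_in_Pn by metis
  then show "ppath n h (gm n - 1) (h # [0..<gm n])"
    using gm_pos[of n] successively_padj_Pn[OF n] Pn_subset_Gn \<open>h \<in> Gn n\<close> Hn_not_Pn[OF h]
    by (simp add: ppath_iff Pn_def successively_Cons)
qed (use ppath_length_le[OF n] in auto)

lemma detour_ecc_Pn_nonzero:
  assumes n: "2 \<le> n" and u: "u \<in> Pn n" "u \<noteq> 0"
  shows "detour_ecc n u = gm n"
proof (rule detour_ecc_eqI[OF n])
  show "u \<in> Gn n"
    using u Pn_subset_Gn by blast
  define r where "r = u # filter (\<lambda>x. x \<noteq> u \<and> x \<noteq> 0) [0..<gm n] @ [0]"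
  have r: "distinct r" "set r = Pn n" "last r = 0" "hd r = u" "r \<noteq> []"
    using u zero_in_Pn by (auto simp: r_def Pn_def)
  have "gm n \<in> Hn n"
    using n by (simp add: gm_in_Hn)
  then have "gm n \<in> Gn n" and "gm n \<notin> Pn n"
    using Hn_subset_Gn Hn_not_Pn by auto
  moreover have "padj n 0 (gm n)"
    using padj_zero[OF n \<open>gm n \<in> Gn n\<close>] gm_pos[of n] by simp
  ultimately show "ppath n u (gm n) (r @ [gm n])"
    using r successively_padj_Pn[OF n, of r] Pn_subset_Gn
    by (auto simp: ppath_iff successively_append_iff)
  show "length (r @ [gm n]) = Suc (gm n)"
    using distinct_card[OF r(1)] r(2) by (simp add: card_Pn)
qed (use ppath_length_le[OF n] in auto)

theorem mainTheorem10:
  fixes n :: nat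
  assumes "n \<ge> 3"
  shows "(\<forall>u \<in> Pn n - {0}. detour_ecc n u = 2 ^ (n - 1))
       \<and> detour_ecc n 0 = 2 ^ (n - 1) - 1
       \<and> (\<forall>u \<in> Hn n. detour_ecc n u = 2 ^ (n - 1))
       \<and> detour_rad n = 2 ^ (n - 1) - 1
       \<and> detour_dia n = 2 ^ (n - 1)"
proof -
  have n: "2 \<le> n"
    using assms by simp
  have "detour_ecc n ` Gn n = {gm n - 1, gm n}"
  proof
    show "detour_ecc n ` Gn n \<subseteq> {gm n - 1, gm n}"
      using detour_ecc_zero[OF n] detour_ecc_Pn_nonzero[OF n] detour_ecc_Hn[OF n]
      by (auto simp: Gn_def)
    have "gm n \<in> Hn n"
      using n by (simp add: gm_in_Hn)
    then have "detour_ecc n (gm n) = gm n" and "gm n \<in> Gn n"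
      using detour_ecc_Hn[OF n] Hn_subset_Gn by auto
    with zero_in_Gn show "{gm n - 1, gm n} \<subseteq> detour_ecc n ` Gn n"
      using detour_ecc_zero[OF n] by (metis empty_subsetI image_eqI insert_subset)
  qed
  then have "detour_rad n = gm n - 1" and "detour_dia n = gm n"
    unfolding detour_rad_def detour_dia_def by auto
  then show ?thesis
    using detour_ecc_zero[OF n] detour_ecc_Pn_nonzero[OF n] detour_ecc_Hn[OF n]
    by (simp add: gm_def)
qed

end
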